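(* Let $R$ be a ring, $M$ a nonzero left $R$-module, $\Omega$ an infinite set, $N$ either $\bigoplus_{i\in\Omega} M$ or $\prod_{i\in\Omega} M$, and $E=\mathrm{End}_R(N)$. Let $(U_i)_{i\in I}$ be a family of subsets of $E$ with $\bigcup_{i\in I}U_i=E$ and $|I|\le|\Omega|$. Then there exist $i\in I$ and a moiety $\Sigma\subseteq\Omega$ such that $\Sigma$ is full with respect to $U_i$.
   Context: Rings are unital and associative; endomorphisms are written on the right of their arguments. For $\Sigma\subseteq\Omega$, $M^{\Sigma}$ denotes the $R$-submodule of $N$ consisting of elements supported on the coordinates in $\Sigma$ (so $N = M^{\Sigma}\oplus M^{\Omega\setminus\Sigma}$). For $U\subseteq E$, let $U_{\{\Sigma\}}=\{f\in U : M^{\Sigma}f\subseteq M^{\Sigma},\ M^{\Omega\setminus\Sigma}f\subseteq M^{\Omega\setminus\Sigma}\}$. A subset $\Sigma\subseteq\Omega$ is called full with respect to $U\subseteq E$ if every $R$-endomorphism of $M^{\Sigma}$ is the restriction to $M^{\Sigma}$ of some member of $U_{\{\Sigma\}}$. A subset $\Sigma\subseteq\Omega$ is a moiety if $|\Sigma|=|\Omega|=|\Omega\setminus\Sigma|$. *)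

theory Defs
  imports "HOL-Library.FuncSet" "HOL-Library.Equipollence"
begin

definition left_module :: "('r::ring_1 \<Rightarrow> 'm::ab_group_add \<Rightarrow> 'm) \<Rightarrow> bool" where
  "left_module smul \<longleftrightarrow>
     (\<forall>r x y. smul r (x + y) = smul r x + smul r y) \<and>
     (\<forall>r s x. smul (r + s) x = smul r x + smul s x) \<and>
     (\<forall>r s x. smul (r * s) x = smul r (smul s x)) \<and>
     (\<forall>x. smul 1 x = x)"

definition prod_mod :: "'i set \<Rightarrow> ('i \<Rightarrow> 'm::zero) set" where
  "prod_mod \<Omega> = {f. \<forall>i. i \<notin> \<Omega> \<longrightarrow> f i = 0}"

definition dsum_mod :: "'i set \<Rightarrow> ('i \<Rightarrow> 'm::zero) set" where
  "dsum_mod \<Omega> = {f \<in> prod_mod \<Omega>. finite {i. f i \<noteq> 0}}"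

text \<open>R-endomorphisms of a submodule S of N (with coordinatewise operations),
  represented extensionally (undefined outside S).\<close>
definition End_on ::
  "('r::ring_1 \<Rightarrow> 'm::ab_group_add \<Rightarrow> 'm) \<Rightarrow> ('i \<Rightarrow> 'm) set \<Rightarrow> (('i \<Rightarrow> 'm) \<Rightarrow> ('i \<Rightarrow> 'm)) set" where
  "End_on smul S = {\<phi>. \<phi> \<in> extensional S \<and> \<phi> ` S \<subseteq> S \<and>
     (\<forall>x\<in>S. \<forall>y\<in>S. \<phi> (\<lambda>i. x i + y i) = (\<lambda>i. \<phi> x i + \<phi> y i)) \<and>
     (\<forall>r. \<forall>x\<in>S. \<phi> (\<lambda>i. smul r (x i)) = (\<lambda>i. smul r (\<phi> x i)))}"

definition supp_sub :: "('i \<Rightarrow> 'm::zero) set \<Rightarrow> 'i set \<Rightarrow> 'i set \<Rightarrow> ('i \<Rightarrow> 'm) set" where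
  "supp_sub N \<Omega> \<Sigma> = {f \<in> N. \<forall>i\<in>\<Omega> - \<Sigma>. f i = 0}"

definition setstab ::
  "(('i \<Rightarrow> 'm::zero) \<Rightarrow> ('i \<Rightarrow> 'm)) set \<Rightarrow> ('i \<Rightarrow> 'm) set \<Rightarrow> 'i set \<Rightarrow> 'i set
     \<Rightarrow> (('i \<Rightarrow> 'm) \<Rightarrow> ('i \<Rightarrow> 'm)) set" where
  "setstab U N \<Omega> \<Sigma> = {f \<in> U. f ` supp_sub N \<Omega> \<Sigma> \<subseteq> supp_sub N \<Omega> \<Sigma> \<and>
                              f ` supp_sub N \<Omega> (\<Omega> - \<Sigma>) \<subseteq> supp_sub N \<Omega> (\<Omega> - \<Sigma>)}"

definition full_wrt ::
  "('r::ring_1 \<Rightarrow> 'm::ab_group_add \<Rightarrow> 'm) \<Rightarrow> ('i \<Rightarrow> 'm) set \<Rightarrow> 'i set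
     \<Rightarrow> (('i \<Rightarrow> 'm) \<Rightarrow> ('i \<Rightarrow> 'm)) set \<Rightarrow> 'i set \<Rightarrow> bool" where
  "full_wrt smul N \<Omega> U \<Sigma> \<longleftrightarrow>
     (\<forall>g \<in> End_on smul (supp_sub N \<Omega> \<Sigma>). \<exists>f \<in> setstab U N \<Omega> \<Sigma>.
        \<forall>x \<in> supp_sub N \<Omega> \<Sigma>. g x = f x)"

definition moiety :: "'i set \<Rightarrow> 'i set \<Rightarrow> bool" where
  "moiety \<Omega> \<Sigma> \<longleftrightarrow> \<Sigma> \<subseteq> \<Omega> \<and> \<Sigma> \<approx> \<Omega> \<and> \<Omega> - \<Sigma> \<approx> \<Omega>"

end

theory Submission
  imports Defs "HOL-Library.Disjoint_Sets"
begin

text \<open>Since \<open>\<Omega> \<times> \<Omega> \<approx> \<Omega>\<close>, the set \<open>\<Omega>\<close> splits into \<open>|\<Omega>|\<close> pairwise disjoint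
  moieties, so we may give each \<open>i \<in> I\<close> its own moiety \<open>\<Sigma>\<^sub>i\<close>. If no \<open>\<Sigma>\<^sub>i\<close> were full
  with respect to \<open>U\<^sub>i\<close>, pick for every \<open>i\<close> an endomorphism \<open>g\<^sub>i\<close> of \<open>M\<^bsup>\<Sigma>\<^sub>i\<^esup>\<close> that is
  not the restriction of a member of \<open>(U\<^sub>i)\<^sub>{\<Sigma>\<^sub>i}\<close>. The block-diagonal endomorphism of \<open>N\<close>
  acting as \<open>g\<^sub>i\<close> on each block \<open>M\<^bsup>\<Sigma>\<^sub>i\<^esup>\<close> and as \<open>0\<close> on the remaining coordinates lies
  in some \<open>U\<^sub>j\<close>; it stabilises \<open>M\<^bsup>\<Sigma>\<^sub>j\<^esup>\<close> and its complement and restricts to \<open>g\<^sub>j\<close>,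
  a contradiction. For the direct sum it maps \<open>N\<close> into \<open>N\<close> because a finitely
  supported vector meets only finitely many blocks.\<close>

lemma infinite_disjoint_moieties:
  assumes "infinite \<Omega>"
  obtains \<Sigma> :: "'i \<Rightarrow> 'i set"
  where "disjoint_family_on \<Sigma> \<Omega>" and "\<And>k. k \<in> \<Omega> \<Longrightarrow> moiety \<Omega> (\<Sigma> k)"
proof -
  obtain h where h: "bij_betw h (\<Omega> \<times> \<Omega>) \<Omega>"
    by (metis assms card_of_Times_same_infinite card_of_ordIso)
  define \<Sigma> where "\<Sigma> k = h ` ({k} \<times> \<Omega>)" for k
  have disjoint: "disjoint_family_on \<Sigma> \<Omega>"
    using bij_betw_imp_inj_on[OF h]
    unfolding disjoint_family_on_def \<Sigma>_def inj_on_def by blast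
  have sub: "\<Sigma> k \<subseteq> \<Omega>" if "k \<in> \<Omega>" for k
    using bij_betw_imp_surj_on[OF h] that unfolding \<Sigma>_def by blast
  have eqpoll: "\<Sigma> k \<approx> \<Omega>" if "k \<in> \<Omega>" for k
  proof -
    have "inj_on h ({k} \<times> \<Omega>)"
      using that by (intro inj_on_subset[OF bij_betw_imp_inj_on[OF h]]) blast
    then have "\<Sigma> k \<approx> {k} \<times> \<Omega>"
      unfolding \<Sigma>_def by (rule inj_on_image_eqpoll_self)
    then show ?thesis
      using times_singleton_eqpoll by (rule eqpoll_trans)
  qed
  have "moiety \<Omega> (\<Sigma> k)" if k: "k \<in> \<Omega>" for k
  proof -
    have "\<Omega> - {k} \<noteq> {}"
      using assms by (metis finite.emptyI infinite_remove)
    then obtain k' where k': "k' \<in> \<Omega>" "k' \<noteq> k" by blast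
    have "\<Sigma> k' \<subseteq> \<Omega> - \<Sigma> k"
      using disjoint sub[OF k'(1)] k k' unfolding disjoint_family_on_def by blast
    then have "\<Omega> \<lesssim> \<Omega> - \<Sigma> k"
      using eqpoll_imp_lepoll[OF eqpoll_sym[OF eqpoll[OF k'(1)]]] lepoll_trans subset_imp_lepoll
      by blast
    then have "\<Omega> - \<Sigma> k \<approx> \<Omega>"
      using lepoll_antisym[OF subset_imp_lepoll[OF Diff_subset]] by blast
    then show ?thesis
      unfolding moiety_def using sub eqpoll k by blast
  qed
  with disjoint that show thesis by blast
qed

lemma disjoint_family_on_comp_inj:
  assumes "disjoint_family_on A J" and "inj_on e I" and "e ` I \<subseteq> J"
  shows "disjoint_family_on (A \<circ> e) I"
  unfolding disjoint_family_on_def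
proof (intro ballI impI)
  fix i j assume "i \<in> I" "j \<in> I" "i \<noteq> j"
  then have "e i \<noteq> e j" and "e i \<in> J" and "e j \<in> J"
    using assms(2,3) by (auto simp: inj_on_def)
  then show "(A \<circ> e) i \<inter> (A \<circ> e) j = {}"
    using assms(1) by (simp add: disjoint_family_on_def)
qed

lemma lepoll_disjoint_moieties:
  assumes "infinite \<Omega>" and "I \<lesssim> \<Omega>"
  obtains \<Sigma> :: "'j \<Rightarrow> 'i set"
  where "disjoint_family_on \<Sigma> I" and "\<And>i. i \<in> I \<Longrightarrow> moiety \<Omega> (\<Sigma> i)"
proof -
  obtain \<Sigma> :: "'i \<Rightarrow> 'i set" where disjoint: "disjoint_family_on \<Sigma> \<Omega>"
    and moiety: "\<And>k. k \<in> \<Omega> \<Longrightarrow> moiety \<Omega> (\<Sigma> k)"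
    using infinite_disjoint_moieties[OF assms(1)] by blast
  obtain e where e: "inj_on e I" "e ` I \<subseteq> \<Omega>"
    using assms(2) unfolding lepoll_def by blast
  have "disjoint_family_on (\<Sigma> \<circ> e) I"
    using disjoint e by (rule disjoint_family_on_comp_inj)
  moreover have "moiety \<Omega> ((\<Sigma> \<circ> e) i)" if "i \<in> I" for i
    using moiety e(2) that by auto
  ultimately show thesis by (rule that)
qed

lemma the_block_eq:
  assumes "disjoint_family_on \<Sigma> I" and "i \<in> I" and "w \<in> \<Sigma> i"
  shows "(THE j. j \<in> I \<and> w \<in> \<Sigma> j) = i"
proof (rule the_equality)
  show "\<And>j. j \<in> I \<and> w \<in> \<Sigma> j \<Longrightarrow> j = i"
    using assms unfolding disjoint_family_on_def by blast
qed (use assms in blast)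

lemma finite_blocks_meeting:
  assumes "disjoint_family_on \<Sigma> I" and "finite A"
  shows "finite {i \<in> I. \<Sigma> i \<inter> A \<noteq> {}}"
proof -
  have "{i \<in> I. \<Sigma> i \<inter> A \<noteq> {}} \<subseteq> (\<lambda>w. THE j. j \<in> I \<and> w \<in> \<Sigma> j) ` A"
  proof
    fix i assume "i \<in> {i \<in> I. \<Sigma> i \<inter> A \<noteq> {}}"
    then obtain w where w: "i \<in> I" "w \<in> \<Sigma> i" "w \<in> A" by blast
    show "i \<in> (\<lambda>w. THE j. j \<in> I \<and> w \<in> \<Sigma> j) ` A"
      using the_block_eq[OF assms(1) w(1,2)] w(3) by force
  qed
  then show ?thesis
    by (rule finite_subset[OF _ finite_imageI[OF assms(2)]])
qed

lemma
  assumes "\<phi> \<in> End_on smul S" and "x \<in> S"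
  shows End_on_mem: "\<phi> x \<in> S"
    and End_on_add: "y \<in> S \<Longrightarrow> \<phi> (\<lambda>w. x w + y w) = (\<lambda>w. \<phi> x w + \<phi> y w)"
    and End_on_smul: "\<phi> (\<lambda>w. smul r (x w)) = (\<lambda>w. smul r (\<phi> x w))"
  using assms by (auto simp: End_on_def)

lemma End_on_zero:
  assumes "\<phi> \<in> End_on smul S" and "(\<lambda>w. 0) \<in> S"
  shows "\<phi> (\<lambda>w. 0) = (\<lambda>w. 0)"
proof -
  have "\<phi> (\<lambda>w. 0) = (\<lambda>w. \<phi> (\<lambda>w. 0) w + \<phi> (\<lambda>w. 0) w)"
    using End_on_add[OF assms assms(2)] by simp
  then show ?thesis by (simp add: fun_eq_iff)
qed

definition coord_proj :: "'i set \<Rightarrow> ('i \<Rightarrow> 'm::zero) \<Rightarrow> 'i \<Rightarrow> 'm" where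
  "coord_proj S x = (\<lambda>w. if w \<in> S then x w else 0)"

lemma coord_proj_add:
  fixes x y :: "'i \<Rightarrow> 'm::monoid_add"
  shows "coord_proj S (\<lambda>w. x w + y w) = (\<lambda>w. coord_proj S x w + coord_proj S y w)"
  by (auto simp: coord_proj_def)

lemma coord_proj_smul:
  assumes "smul r 0 = 0"
  shows "coord_proj S (\<lambda>w. smul r (x w)) = (\<lambda>w. smul r (coord_proj S x w))"
  using assms by (auto simp: coord_proj_def)

definition block_diag ::
  "('i \<Rightarrow> 'm::zero) set \<Rightarrow> 'j set \<Rightarrow> ('j \<Rightarrow> 'i set) \<Rightarrow> ('j \<Rightarrow> ('i \<Rightarrow> 'm) \<Rightarrow> 'i \<Rightarrow> 'm)
     \<Rightarrow> ('i \<Rightarrow> 'm) \<Rightarrow> 'i \<Rightarrow> 'm" where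
  "block_diag N I \<Sigma> G = (\<lambda>x\<in>N. \<lambda>w.
     if \<exists>i\<in>I. w \<in> \<Sigma> i
     then let i = THE i. i \<in> I \<and> w \<in> \<Sigma> i in G i (coord_proj (\<Sigma> i) x) w
     else 0)"

lemma block_diag_apply_block:
  assumes "disjoint_family_on \<Sigma> I" and "i \<in> I" and "w \<in> \<Sigma> i" and "x \<in> N"
  shows "block_diag N I \<Sigma> G x w = G i (coord_proj (\<Sigma> i) x) w"
proof -
  have "\<exists>j\<in>I. w \<in> \<Sigma> j"
    using assms(2,3) by blast
  then show ?thesis
    using the_block_eq[OF assms(1-3)] assms(4) by (simp add: block_diag_def Let_def)
qed

lemma block_diag_apply_outside:
  assumes "w \<notin> (\<Union>i\<in>I. \<Sigma> i)" and "x \<in> N"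
  shows "block_diag N I \<Sigma> G x w = 0"
  using assms by (auto simp: block_diag_def)

locale coord_module =
  fixes smul :: "'r::ring_1 \<Rightarrow> 'm::ab_group_add \<Rightarrow> 'm"
    and \<Omega> :: "'i set"
    and N :: "('i \<Rightarrow> 'm) set"
  assumes left_module: "left_module smul"
    and N_cases: "N = dsum_mod \<Omega> \<or> N = prod_mod \<Omega>"
begin

lemma smul_zero: "smul r 0 = 0"
proof -
  have "smul r 0 = smul r 0 + smul r 0"
    using left_module unfolding left_module_def by (metis add_0)
  then show ?thesis by simp
qed

lemma zero_mem: "(\<lambda>w. 0) \<in> N"
  using N_cases by (auto simp: dsum_mod_def prod_mod_def)

lemma add_mem:
  assumes "x \<in> N" and "y \<in> N"
  shows "(\<lambda>w. x w + y w) \<in> N"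
proof -
  have "{w. x w + y w \<noteq> 0} \<subseteq> {w. x w \<noteq> 0} \<union> {w. y w \<noteq> 0}" by auto
  then show ?thesis
    using N_cases assms by (auto simp: dsum_mod_def prod_mod_def intro: finite_subset)
qed

lemma smul_mem:
  assumes "x \<in> N"
  shows "(\<lambda>w. smul r (x w)) \<in> N"
proof -
  have "{w. smul r (x w) \<noteq> 0} \<subseteq> {w. x w \<noteq> 0}"
    using smul_zero by auto
  then show ?thesis
    using N_cases assms smul_zero by (auto simp: dsum_mod_def prod_mod_def intro: finite_subset)
qed

lemma coord_proj_mem:
  assumes "x \<in> N"
  shows "coord_proj S x \<in> N"
  using N_cases assms
  by (auto simp: coord_proj_def dsum_mod_def prod_mod_def elim: rev_finite_subset)

lemma supp_sub_vanish:
  assumes "x \<in> supp_sub N \<Omega> S" and "w \<notin> S"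
  shows "x w = 0"
  using N_cases assms by (auto simp: supp_sub_def dsum_mod_def prod_mod_def)

lemma zero_mem_supp_sub: "(\<lambda>w. 0) \<in> supp_sub N \<Omega> S"
  using zero_mem by (simp add: supp_sub_def)

lemma coord_proj_mem_supp_sub:
  assumes "x \<in> N"
  shows "coord_proj S x \<in> supp_sub N \<Omega> S"
  using coord_proj_mem[OF assms] by (simp add: supp_sub_def coord_proj_def)

lemma coord_proj_supp_sub:
  assumes "x \<in> supp_sub N \<Omega> S"
  shows "coord_proj S x = x"
  using supp_sub_vanish[OF assms] by (auto simp: coord_proj_def)

lemma coord_proj_supp_sub_disjoint:
  assumes "x \<in> supp_sub N \<Omega> S" and "T \<inter> S = {}"
  shows "coord_proj T x = (\<lambda>w. 0)"
  using supp_sub_vanish[OF assms(1)] assms(2) by (auto simp: coord_proj_def fun_eq_iff)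

end

locale block_family = coord_module +
  fixes I :: "'j set"
    and \<Sigma> :: "'j \<Rightarrow> 'i set"
    and G :: "'j \<Rightarrow> ('i \<Rightarrow> 'm::ab_group_add) \<Rightarrow> 'i \<Rightarrow> 'm"
  assumes blocks_subset: "\<And>i. i \<in> I \<Longrightarrow> \<Sigma> i \<subseteq> \<Omega>"
    and blocks_disjoint: "disjoint_family_on \<Sigma> I"
    and G_End: "\<And>i. i \<in> I \<Longrightarrow> G i \<in> End_on smul (supp_sub N \<Omega> (\<Sigma> i))"
begin

lemma G_mem:
  assumes "i \<in> I" and "x \<in> supp_sub N \<Omega> (\<Sigma> i)"
  shows "G i x \<in> supp_sub N \<Omega> (\<Sigma> i)"
  using End_on_mem[OF G_End[OF assms(1)] assms(2)] .

lemma G_zero: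
  assumes "i \<in> I"
  shows "G i (\<lambda>w. 0) = (\<lambda>w. 0)"
  using End_on_zero[OF G_End[OF assms] zero_mem_supp_sub] .

lemma block_diag_support:
  assumes x: "x \<in> N"
  shows "{w. block_diag N I \<Sigma> G x w \<noteq> 0}
    \<subseteq> (\<Union>i\<in>{i \<in> I. \<Sigma> i \<inter> {w. x w \<noteq> 0} \<noteq> {}}. {w. G i (coord_proj (\<Sigma> i) x) w \<noteq> 0})"
proof
  fix w assume "w \<in> {w. block_diag N I \<Sigma> G x w \<noteq> 0}"
  then have nz: "block_diag N I \<Sigma> G x w \<noteq> 0" by simp
  then obtain i where i: "i \<in> I" "w \<in> \<Sigma> i"
    using block_diag_apply_outside[OF _ x] by (meson UN_E)
  with nz have nz': "G i (coord_proj (\<Sigma> i) x) w \<noteq> 0"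
    using block_diag_apply_block[OF blocks_disjoint i x] by simp
  then have "coord_proj (\<Sigma> i) x \<noteq> (\<lambda>w. 0)"
    using G_zero[OF i(1)] by auto
  then have "\<Sigma> i \<inter> {w. x w \<noteq> 0} \<noteq> {}"
    by (auto simp: coord_proj_def fun_eq_iff split: if_splits)
  with i(1) nz' show "w \<in> (\<Union>i\<in>{i \<in> I. \<Sigma> i \<inter> {w. x w \<noteq> 0} \<noteq> {}}.
      {w. G i (coord_proj (\<Sigma> i) x) w \<noteq> 0})"
    by blast
qed

lemma block_diag_mem:
  assumes x: "x \<in> N"
  shows "block_diag N I \<Sigma> G x \<in> N"
proof -
  have in_prod: "block_diag N I \<Sigma> G x \<in> prod_mod \<Omega>"
    unfolding prod_mod_def using blocks_subset by (auto intro!: block_diag_apply_outside[OF _ x])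
  have "finite {w. block_diag N I \<Sigma> G x w \<noteq> 0}" if dsum: "N = dsum_mod \<Omega>"
  proof (rule finite_subset[OF block_diag_support[OF x]], rule finite_UN_I)
    show "finite {i \<in> I. \<Sigma> i \<inter> {w. x w \<noteq> 0} \<noteq> {}}"
      using finite_blocks_meeting[OF blocks_disjoint] x dsum by (simp add: dsum_mod_def)
    show "finite {w. G i (coord_proj (\<Sigma> i) x) w \<noteq> 0}"
      if "i \<in> {i \<in> I. \<Sigma> i \<inter> {w. x w \<noteq> 0} \<noteq> {}}" for i
      using G_mem[OF _ coord_proj_mem_supp_sub[OF x]] that dsum
      by (simp add: supp_sub_def dsum_mod_def)
  qed
  then show ?thesis
    using N_cases in_prod by (auto simp: dsum_mod_def)
qed

lemma block_diag_End: "block_diag N I \<Sigma> G \<in> End_on smul N"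
  unfolding End_on_def
proof (intro CollectI conjI ballI allI subsetI ext)
  show "block_diag N I \<Sigma> G \<in> extensional N"
    by (simp add: block_diag_def)
  show "y \<in> N" if "y \<in> block_diag N I \<Sigma> G ` N" for y
    using that block_diag_mem by blast
next
  fix x y w assume x: "x \<in> N" and y: "y \<in> N"
  show "block_diag N I \<Sigma> G (\<lambda>w. x w + y w) w = block_diag N I \<Sigma> G x w + block_diag N I \<Sigma> G y w"
  proof (cases "\<exists>i\<in>I. w \<in> \<Sigma> i")
    case True
    then obtain i where i: "i \<in> I" "w \<in> \<Sigma> i" by blast
    have "G i (coord_proj (\<Sigma> i) (\<lambda>w. x w + y w))
        = (\<lambda>w. G i (coord_proj (\<Sigma> i) x) w + G i (coord_proj (\<Sigma> i) y) w)"
      unfolding coord_proj_add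
      using End_on_add[OF G_End[OF i(1)] coord_proj_mem_supp_sub[OF x] coord_proj_mem_supp_sub[OF y]] .
    then show ?thesis
      using block_diag_apply_block[OF blocks_disjoint i, where N = N and G = G] x y add_mem[OF x y]
      by simp
  next
    case False
    then show ?thesis
      using block_diag_apply_outside[where N = N and I = I and \<Sigma> = \<Sigma> and G = G] x y add_mem[OF x y]
      by simp
  qed
next
  fix r x w assume x: "x \<in> N"
  show "block_diag N I \<Sigma> G (\<lambda>w. smul r (x w)) w = smul r (block_diag N I \<Sigma> G x w)"
  proof (cases "\<exists>i\<in>I. w \<in> \<Sigma> i")
    case True
    then obtain i where i: "i \<in> I" "w \<in> \<Sigma> i" by blast
    have "G i (coord_proj (\<Sigma> i) (\<lambda>w. smul r (x w))) = (\<lambda>w. smul r (G i (coord_proj (\<Sigma> i) x) w))"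
      unfolding coord_proj_smul[where smul = smul, OF smul_zero]
      using End_on_smul[OF G_End[OF i(1)] coord_proj_mem_supp_sub[OF x]] .
    then show ?thesis
      using block_diag_apply_block[OF blocks_disjoint i, where N = N and G = G] x smul_mem[OF x]
      by simp
  next
    case False
    then show ?thesis
      using block_diag_apply_outside[where N = N and I = I and \<Sigma> = \<Sigma> and G = G] x smul_mem[OF x] smul_zero
      by simp
  qed
qed

lemma block_diag_on_block:
  assumes i: "i \<in> I" and x: "x \<in> supp_sub N \<Omega> (\<Sigma> i)"
  shows "block_diag N I \<Sigma> G x = G i x"
proof
  fix w
  have xN: "x \<in> N" using x by (simp add: supp_sub_def)
  have Gx_vanish: "G i x w = 0" if "w \<notin> \<Sigma> i"
    using supp_sub_vanish[OF G_mem[OF i x] that] .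
  show "block_diag N I \<Sigma> G x w = G i x w"
  proof (cases "\<exists>j\<in>I. w \<in> \<Sigma> j")
    case True
    then obtain j where j: "j \<in> I" "w \<in> \<Sigma> j" by blast
    have on_j: "block_diag N I \<Sigma> G x w = G j (coord_proj (\<Sigma> j) x) w"
      using block_diag_apply_block[OF blocks_disjoint j xN] .
    show ?thesis
    proof (cases "j = i")
      case True
      then show ?thesis
        using on_j coord_proj_supp_sub[OF x] by simp
    next
      case False
      then have "\<Sigma> j \<inter> \<Sigma> i = {}"
        using blocks_disjoint i j(1) by (simp add: disjoint_family_on_def)
      then have "coord_proj (\<Sigma> j) x = (\<lambda>w. 0)" and "w \<notin> \<Sigma> i"
        using coord_proj_supp_sub_disjoint[OF x] j(2) by auto
      then show ?thesis
        using on_j G_zero[OF j(1)] Gx_vanish by simp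
    qed
  next
    case False
    then show ?thesis
      using block_diag_apply_outside[where N = N and I = I and \<Sigma> = \<Sigma> and G = G] xN Gx_vanish i
      by auto
  qed
qed

lemma block_diag_setstab:
  assumes i: "i \<in> I" and "block_diag N I \<Sigma> G \<in> U"
  shows "block_diag N I \<Sigma> G \<in> setstab U N \<Omega> (\<Sigma> i)"
  unfolding setstab_def
proof (intro CollectI conjI image_subsetI)
  show "block_diag N I \<Sigma> G \<in> U" by fact
  show "block_diag N I \<Sigma> G x \<in> supp_sub N \<Omega> (\<Sigma> i)" if "x \<in> supp_sub N \<Omega> (\<Sigma> i)" for x
    using block_diag_on_block[OF i that] G_mem[OF i that] by simp
next
  fix x assume x: "x \<in> supp_sub N \<Omega> (\<Omega> - \<Sigma> i)"
  then have xN: "x \<in> N" by (simp add: supp_sub_def)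
  have "coord_proj (\<Sigma> i) x = (\<lambda>w. 0)"
    using coord_proj_supp_sub_disjoint[OF x] by blast
  then have "block_diag N I \<Sigma> G x w = 0" if "w \<in> \<Sigma> i" for w
    using block_diag_apply_block[OF blocks_disjoint i that xN] G_zero[OF i] by simp
  then show "block_diag N I \<Sigma> G x \<in> supp_sub N \<Omega> (\<Omega> - \<Sigma> i)"
    using block_diag_mem[OF xN] by (simp add: supp_sub_def)
qed

end

lemma (in coord_module) exists_full_block:
  assumes cover: "(\<Union>i\<in>I. U i) = End_on smul N"
    and "\<And>i. i \<in> I \<Longrightarrow> \<Sigma> i \<subseteq> \<Omega>" and "disjoint_family_on \<Sigma> I"
  shows "\<exists>i\<in>I. full_wrt smul N \<Omega> (U i) (\<Sigma> i)"
proof (rule ccontr)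
  assume "\<not> ?thesis"
  then have "\<forall>i\<in>I. \<exists>g. g \<in> End_on smul (supp_sub N \<Omega> (\<Sigma> i)) \<and>
      \<not> (\<exists>f \<in> setstab (U i) N \<Omega> (\<Sigma> i). \<forall>x \<in> supp_sub N \<Omega> (\<Sigma> i). g x = f x)"
    unfolding full_wrt_def by blast
  from bchoice[OF this] obtain G where G: "\<forall>i\<in>I. G i \<in> End_on smul (supp_sub N \<Omega> (\<Sigma> i)) \<and>
      \<not> (\<exists>f \<in> setstab (U i) N \<Omega> (\<Sigma> i). \<forall>x \<in> supp_sub N \<Omega> (\<Sigma> i). G i x = f x)"
    by (elim exE)
  interpret block_family smul \<Omega> N I \<Sigma> G
    using assms G by unfold_locales auto
  obtain i where i: "i \<in> I" and "block_diag N I \<Sigma> G \<in> U i"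
    using block_diag_End cover by blast
  then have "block_diag N I \<Sigma> G \<in> setstab (U i) N \<Omega> (\<Sigma> i)"
    by (rule block_diag_setstab)
  moreover have "\<forall>x \<in> supp_sub N \<Omega> (\<Sigma> i). G i x = block_diag N I \<Sigma> G x"
    using block_diag_on_block[OF i] by simp
  ultimately show False
    using G i by blast
qed

theorem lemma2:
  fixes smul :: "'r::ring_1 \<Rightarrow> 'm::ab_group_add \<Rightarrow> 'm"
    and \<Omega> :: "'i set"
    and N :: "('i \<Rightarrow> 'm) set"
    and U :: "'j \<Rightarrow> (('i \<Rightarrow> 'm) \<Rightarrow> ('i \<Rightarrow> 'm)) set"
    and I :: "'j set"
  assumes "left_module smul"
    and "\<exists>m::'m. m \<noteq> 0"
    and "infinite \<Omega>"
    and "N = dsum_mod \<Omega> \<or> N = prod_mod \<Omega>"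
    and "(\<Union>i\<in>I. U i) = End_on smul N"
    and "I \<lesssim> \<Omega>"
  shows "\<exists>i\<in>I. \<exists>\<Sigma>. moiety \<Omega> \<Sigma> \<and> full_wrt smul N \<Omega> (U i) \<Sigma>"
proof -
  interpret coord_module smul \<Omega> N
    using assms(1,4) by unfold_locales
  obtain \<Sigma> :: "'j \<Rightarrow> 'i set" where disjoint: "disjoint_family_on \<Sigma> I"
    and moiety: "\<And>i. i \<in> I \<Longrightarrow> moiety \<Omega> (\<Sigma> i)"
    using lepoll_disjoint_moieties[OF assms(3,6)] by blast
  have "\<Sigma> i \<subseteq> \<Omega>" if "i \<in> I" for i
    using moiety[OF that] by (simp add: moiety_def)
  then obtain i where "i \<in> I" and "full_wrt smul N \<Omega> (U i) (\<Sigma> i)"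
    using exists_full_block[OF assms(5) _ disjoint] by blast
  with moiety show ?thesis by blast
qed

end
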